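(* Let $(\mathfrak{g},[\cdot,\cdot]_{\mathfrak{g}})$ be a Leibniz algebra over a field $\mathbf{K}$, $(V;\rho^L,\rho^R)$ a representation, and $T:V\to\mathfrak{g}$ a relative Rota-Baxter operator. Then for every Nijenhuis element $x\in\mathrm{Nij}(T)$, with $\mathfrak{T}=\partial_Tx$, i.e. $\mathfrak{T}(u)=T\rho^L(x)u-[x,Tu]_{\mathfrak{g}}$, the family $T_t=T+t\mathfrak{T}$ is a trivial linear deformation of $T$.
   Context: A Leibniz algebra is a vector space $\mathfrak{g}$ with a bilinear map $[\cdot,\cdot]_{\mathfrak{g}}$ such that $[x,[y,z]_{\mathfrak{g}}]_{\mathfrak{g}}=[[x,y]_{\mathfrak{g}},z]_{\mathfrak{g}}+[y,[x,z]_{\mathfrak{g}}]_{\mathfrak{g}}$. A representation $(V;\rho^L,\rho^R)$ is a vector space $V$ with linear maps $\rho^L,\rho^R:\mathfrak{g}\to\mathfrak{gl}(V)$ with $\rho^L([x,y]_{\mathfrak{g}})=[\rho^L(x),\rho^L(y)]$, $\rho^R([x,y]_{\mathfrak{g}})=[\rho^L(x),\rho^R(y)]$, $\rho^R(y)\rho^L(x)=-\rho^R(y)\rho^R(x)$ (commutators in $\mathfrak{gl}(V)$). $L_xy=[x,y]_{\mathfrak{g}}$. A relative Rota-Baxter operator is a linear $T:V\to\mathfrak{g}$ with $[Tv_1,Tv_2]_{\mathfrak{g}}=T(\rho^L(Tv_1)v_2+\rho^R(Tv_2)v_1)$ for all $v_1,v_2\in V$. A homomorphism from a relative Rota-Baxter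 operator $T'$ to $T$ is a pair of a Leibniz algebra homomorphism $\phi_{\mathfrak{g}}:\mathfrak{g}\to\mathfrak{g}$ and a linear map $\phi_V:V\to V$ with $T\circ\phi_V=\phi_{\mathfrak{g}}\circ T'$, $\phi_V\rho^L(y)u=\rho^L(\phi_{\mathfrak{g}}(y))\phi_V(u)$, $\phi_V\rho^R(y)u=\rho^R(\phi_{\mathfrak{g}}(y))\phi_V(u)$ for all $y\in\mathfrak{g},u\in V$. A linear map $\mathfrak{T}:V\to\mathfrak{g}$ generates a linear deformation $T_t=T+t\mathfrak{T}$ if $T+t\mathfrak{T}$ is a relative Rota-Baxter operator for every $t\in\mathbf{K}$; it is trivial if there is $y\in\mathfrak{g}$ such that for all $t$, $(\mathrm{Id}_{\mathfrak{g}}+tL_y,\mathrm{Id}_V+t\rho^L(y))$ is a homomorphism from $T_t$ to $T$. An element $x\in\mathfrak{g}$ is a Nijenhuis element associated to $T$ if for all $y,z\in\mathfrak{g}$, $u\in V$: $[[x,y]_{\mathfrak{g}},[x,z]_{\mathfrak{g}}]_{\mathfrak{g}}=0$, $\rho^L([x,y]_{\mathfrak{g}})\rho^L(x)=0$, $\rho^R([x,y]_{\mathfrak{g}})\rho^L(x)=0$, and $[x,T\rho^L(x)u-[x,Tu]_{\mathfrak{g}}]_{\mathfrak{g}}=0$. $\mathrm{Nij}(T)$ denotes the set of these. *)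

theory Defs
  imports Main "HOL.Vector_Spaces"
begin

text \<open>Vector spaces over an arbitrary field 'k are modelled with the library locale
  vector_space (HOL.Vector_Spaces): the Leibniz algebra g lives on type 'g with scalar
  multiplication sg, the representation space V on type 'v with scalar multiplication sv.\<close>

definition leibniz_algebra ::
  "('k::field \<Rightarrow> 'g::ab_group_add \<Rightarrow> 'g) \<Rightarrow> ('g \<Rightarrow> 'g \<Rightarrow> 'g) \<Rightarrow> bool" where
  "leibniz_algebra sg br \<longleftrightarrow>
     vector_space sg \<and>
     (\<forall>x. Vector_Spaces.linear sg sg (br x)) \<and>
     (\<forall>y. Vector_Spaces.linear sg sg (\<lambda>x. br x y)) \<and>
     (\<forall>x y z. br x (br y z) = br (br x y) z + br y (br x z))"

definition representation ::
  "('k::field \<Rightarrow> 'g::ab_group_add \<Rightarrow> 'g) \<Rightarrow> ('g \<Rightarrow> 'g \<Rightarrow> 'g) \<Rightarrow>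
   ('k \<Rightarrow> 'v::ab_group_add \<Rightarrow> 'v) \<Rightarrow> ('g \<Rightarrow> 'v \<Rightarrow> 'v) \<Rightarrow> ('g \<Rightarrow> 'v \<Rightarrow> 'v) \<Rightarrow> bool" where
  "representation sg br sv rhoL rhoR \<longleftrightarrow>
     vector_space sv \<and>
     (\<forall>x. Vector_Spaces.linear sv sv (rhoL x)) \<and>
     (\<forall>x. Vector_Spaces.linear sv sv (rhoR x)) \<and>
     (\<forall>v. Vector_Spaces.linear sg sv (\<lambda>x. rhoL x v)) \<and>
     (\<forall>v. Vector_Spaces.linear sg sv (\<lambda>x. rhoR x v)) \<and>
     (\<forall>x y v. rhoL (br x y) v = rhoL x (rhoL y v) - rhoL y (rhoL x v)) \<and>
     (\<forall>x y v. rhoR (br x y) v = rhoL x (rhoR y v) - rhoR y (rhoL x v)) \<and>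
     (\<forall>x y v. rhoR y (rhoL x v) = - rhoR y (rhoR x v))"

definition relative_RB ::
  "('k::field \<Rightarrow> 'g::ab_group_add \<Rightarrow> 'g) \<Rightarrow> ('g \<Rightarrow> 'g \<Rightarrow> 'g) \<Rightarrow>
   ('k \<Rightarrow> 'v::ab_group_add \<Rightarrow> 'v) \<Rightarrow> ('g \<Rightarrow> 'v \<Rightarrow> 'v) \<Rightarrow> ('g \<Rightarrow> 'v \<Rightarrow> 'v) \<Rightarrow>
   ('v \<Rightarrow> 'g) \<Rightarrow> bool" where
  "relative_RB sg br sv rhoL rhoR T \<longleftrightarrow>
     Vector_Spaces.linear sv sg T \<and>
     (\<forall>v1 v2. br (T v1) (T v2) = T (rhoL (T v1) v2 + rhoR (T v2) v1))"

definition leibniz_hom ::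
  "('k::field \<Rightarrow> 'g::ab_group_add \<Rightarrow> 'g) \<Rightarrow> ('g \<Rightarrow> 'g \<Rightarrow> 'g) \<Rightarrow> ('g \<Rightarrow> 'g) \<Rightarrow> bool" where
  "leibniz_hom sg br phi \<longleftrightarrow>
     Vector_Spaces.linear sg sg phi \<and> (\<forall>x y. phi (br x y) = br (phi x) (phi y))"

definition RB_hom ::
  "('k::field \<Rightarrow> 'g::ab_group_add \<Rightarrow> 'g) \<Rightarrow> ('g \<Rightarrow> 'g \<Rightarrow> 'g) \<Rightarrow>
   ('k \<Rightarrow> 'v::ab_group_add \<Rightarrow> 'v) \<Rightarrow> ('g \<Rightarrow> 'v \<Rightarrow> 'v) \<Rightarrow> ('g \<Rightarrow> 'v \<Rightarrow> 'v) \<Rightarrow>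
   ('v \<Rightarrow> 'g) \<Rightarrow> ('v \<Rightarrow> 'g) \<Rightarrow> ('g \<Rightarrow> 'g) \<Rightarrow> ('v \<Rightarrow> 'v) \<Rightarrow> bool" where
  "RB_hom sg br sv rhoL rhoR T' T phiG phiV \<longleftrightarrow>
     leibniz_hom sg br phiG \<and>
     Vector_Spaces.linear sv sv phiV \<and>
     (\<forall>u. T (phiV u) = phiG (T' u)) \<and>
     (\<forall>y u. phiV (rhoL y u) = rhoL (phiG y) (phiV u)) \<and>
     (\<forall>y u. phiV (rhoR y u) = rhoR (phiG y) (phiV u))"

definition generates_linear_deformation ::
  "('k::field \<Rightarrow> 'g::ab_group_add \<Rightarrow> 'g) \<Rightarrow> ('g \<Rightarrow> 'g \<Rightarrow> 'g) \<Rightarrow>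
   ('k \<Rightarrow> 'v::ab_group_add \<Rightarrow> 'v) \<Rightarrow> ('g \<Rightarrow> 'v \<Rightarrow> 'v) \<Rightarrow> ('g \<Rightarrow> 'v \<Rightarrow> 'v) \<Rightarrow>
   ('v \<Rightarrow> 'g) \<Rightarrow> ('v \<Rightarrow> 'g) \<Rightarrow> bool" where
  "generates_linear_deformation sg br sv rhoL rhoR T TT \<longleftrightarrow>
     Vector_Spaces.linear sv sg TT \<and>
     (\<forall>t. relative_RB sg br sv rhoL rhoR (\<lambda>v. T v + sg t (TT v)))"

definition trivial_linear_deformation ::
  "('k::field \<Rightarrow> 'g::ab_group_add \<Rightarrow> 'g) \<Rightarrow> ('g \<Rightarrow> 'g \<Rightarrow> 'g) \<Rightarrow>
   ('k \<Rightarrow> 'v::ab_group_add \<Rightarrow> 'v) \<Rightarrow> ('g \<Rightarrow> 'v \<Rightarrow> 'v) \<Rightarrow> ('g \<Rightarrow> 'v \<Rightarrow> 'v) \<Rightarrow>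
   ('v \<Rightarrow> 'g) \<Rightarrow> ('v \<Rightarrow> 'g) \<Rightarrow> bool" where
  "trivial_linear_deformation sg br sv rhoL rhoR T TT \<longleftrightarrow>
     generates_linear_deformation sg br sv rhoL rhoR T TT \<and>
     (\<exists>y. \<forall>t. RB_hom sg br sv rhoL rhoR (\<lambda>v. T v + sg t (TT v)) T
                (\<lambda>z. z + sg t (br y z)) (\<lambda>u. u + sv t (rhoL y u)))"

definition Nij ::
  "('g::ab_group_add \<Rightarrow> 'g \<Rightarrow> 'g) \<Rightarrow> ('g \<Rightarrow> 'v::ab_group_add \<Rightarrow> 'v) \<Rightarrow> ('g \<Rightarrow> 'v \<Rightarrow> 'v) \<Rightarrow>
   ('v \<Rightarrow> 'g) \<Rightarrow> 'g set" where
  "Nij br rhoL rhoR T = {x.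
     (\<forall>y z. br (br x y) (br x z) = 0) \<and>
     (\<forall>y u. rhoL (br x y) (rhoL x u) = 0) \<and>
     (\<forall>y u. rhoR (br x y) (rhoL x u) = 0) \<and>
     (\<forall>u. br x (T (rhoL x u) - br x (T u)) = 0)}"

definition dT :: "('g::ab_group_add \<Rightarrow> 'g \<Rightarrow> 'g) \<Rightarrow> ('g \<Rightarrow> 'v \<Rightarrow> 'v) \<Rightarrow> ('v \<Rightarrow> 'g) \<Rightarrow> 'g \<Rightarrow> 'v \<Rightarrow> 'g" where
  "dT br rhoL T x u = T (rhoL x u) - br x (T u)"

end

theory Submission
  imports Defs
begin

text \<open>For \<open>x \<in> Nij(T)\<close> the Nijenhuis conditions alone make
  \<open>(Id + t L\<^sub>x, Id + t \<rho>\<^sup>L(x))\<close> intertwine \<open>T\<^sub>t = T + t \<partial>\<^sub>T x\<close> with \<open>T\<close>.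
  Since \<open>\<partial>\<^sub>T x\<close> is a 1-cocycle, the Rota-Baxter defect of \<open>T\<^sub>t\<close> is \<open>t\<^sup>2\<close> times
  that of \<open>\<partial>\<^sub>T x\<close>, which is annihilated by \<open>L\<^sub>x\<close>; so \<open>Id + t L\<^sub>x\<close> fixes the
  defect. But a homomorphism into a Rota-Baxter operator maps the defect to zero, hence the
  defect vanishes and \<open>T\<^sub>t\<close> is a relative Rota-Baxter operator.\<close>

definition RB_defect ::
  "('g::ab_group_add \<Rightarrow> 'g \<Rightarrow> 'g) \<Rightarrow> ('g \<Rightarrow> 'v::ab_group_add \<Rightarrow> 'v) \<Rightarrow> ('g \<Rightarrow> 'v \<Rightarrow> 'v) \<Rightarrow>
   ('v \<Rightarrow> 'g) \<Rightarrow> 'v \<Rightarrow> 'v \<Rightarrow> 'g" where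
  "RB_defect br rhoL rhoR T u v = br (T u) (T v) - T (rhoL (T u) v + rhoR (T v) u)"

lemma relative_RB_iff_RB_defect:
  "relative_RB sg br sv rhoL rhoR T \<longleftrightarrow>
     Vector_Spaces.linear sv sg T \<and> (\<forall>u v. RB_defect br rhoL rhoR T u v = 0)"
  unfolding relative_RB_def RB_defect_def by simp

lemma RB_hom_RB_defect_eq_0:
  assumes "relative_RB sg br sv rhoL rhoR T"
    and "RB_hom sg br sv rhoL rhoR T' T phiG phiV"
  shows "phiG (RB_defect br rhoL rhoR T' u v) = 0"
proof -
  interpret phiG: Vector_Spaces.linear sg sg phiG
    using assms(2) unfolding RB_hom_def leibniz_hom_def by blast
  interpret phiV: Vector_Spaces.linear sv sv phiV
    using assms(2) unfolding RB_hom_def by blast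
  have RB: "br (T v1) (T v2) = T (rhoL (T v1) v2 + rhoR (T v2) v1)" for v1 v2
    using assms(1) unfolding relative_RB_def by blast
  have bracket: "\<And>a b. phiG (br a b) = br (phiG a) (phiG b)"
    and intertwine: "\<And>w. T (phiV w) = phiG (T' w)"
      "\<And>y w. phiV (rhoL y w) = rhoL (phiG y) (phiV w)"
      "\<And>y w. phiV (rhoR y w) = rhoR (phiG y) (phiV w)"
    using assms(2) unfolding RB_hom_def leibniz_hom_def by blast+
  have "phiG (RB_defect br rhoL rhoR T' u v)
      = br (T (phiV u)) (T (phiV v)) - T (phiV (rhoL (T' u) v + rhoR (T' v) u))"
    unfolding RB_defect_def by (simp add: phiG.diff bracket intertwine(1))
  also have "\<dots> = T (rhoL (T (phiV u)) (phiV v) + rhoR (T (phiV v)) (phiV u))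
      - T (phiV (rhoL (T' u) v) + phiV (rhoR (T' v) u))"
    by (simp only: RB phiV.add)
  also have "\<dots> = 0"
    by (simp add: intertwine)
  finally show ?thesis .
qed

text \<open>The coefficient of \<open>t\<close> in the Rota-Baxter identity for \<open>T + t P\<close>.\<close>
definition RB_cocycle ::
  "('g::ab_group_add \<Rightarrow> 'g \<Rightarrow> 'g) \<Rightarrow> ('g \<Rightarrow> 'v::ab_group_add \<Rightarrow> 'v) \<Rightarrow> ('g \<Rightarrow> 'v \<Rightarrow> 'v) \<Rightarrow>
   ('v \<Rightarrow> 'g) \<Rightarrow> ('v \<Rightarrow> 'g) \<Rightarrow> bool" where
  "RB_cocycle br rhoL rhoR T P \<longleftrightarrow>
     (\<forall>u v. br (P u) (T v) + br (T u) (P v)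
       = T (rhoL (P u) v + rhoR (P v) u) + P (rhoL (T u) v + rhoR (T v) u))"

locale leibniz_alg =
  fixes sg :: "'k::field \<Rightarrow> 'g::ab_group_add \<Rightarrow> 'g" and br :: "'g \<Rightarrow> 'g \<Rightarrow> 'g"
  assumes leibniz_algebra: "leibniz_algebra sg br"
begin

sublocale G: vector_space sg
  using leibniz_algebra unfolding leibniz_algebra_def by blast

sublocale GG: vector_space_pair sg sg ..

sublocale bracket_right: Vector_Spaces.linear sg sg "br y" for y
  using leibniz_algebra unfolding leibniz_algebra_def by blast

sublocale bracket_left: Vector_Spaces.linear sg sg "\<lambda>z. br z y" for y
  using leibniz_algebra unfolding leibniz_algebra_def by blast

lemma leibniz: "br x (br y z) = br (br x y) z + br y (br x z)"
  using leibniz_algebra unfolding leibniz_algebra_def by blast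

lemmas bracket_linear_simps =
  bracket_right.add bracket_right.diff bracket_right.scale
  bracket_left.add bracket_left.diff bracket_left.scale

lemma leibniz_hom_add_scaled_bracket:
  assumes "\<And>y z. br (br x y) (br x z) = 0"
  shows "leibniz_hom sg br (\<lambda>z. z + sg t (br x z))"
  unfolding leibniz_hom_def
proof (intro conjI allI)
  show "Vector_Spaces.linear sg sg (\<lambda>z. z + sg t (br x z))"
    by (intro GG.linear_compose_add G.linear_ident GG.linear_compose_scale_right)
       (rule bracket_right.linear_axioms)
  show "br a b + sg t (br x (br a b)) = br (a + sg t (br x a)) (b + sg t (br x b))" for a b
    using assms[of a b] by (simp add: leibniz[of x a b] bracket_linear_simps algebra_simps)
qed

end

locale leibniz_alg_rep = leibniz_alg sg br
  for sg :: "'k::field \<Rightarrow> 'g::ab_group_add \<Rightarrow> 'g" and br +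
  fixes sv :: "'k \<Rightarrow> 'v::ab_group_add \<Rightarrow> 'v" and rhoL rhoR :: "'g \<Rightarrow> 'v \<Rightarrow> 'v"
  assumes representation: "representation sg br sv rhoL rhoR"
begin

sublocale V: vector_space sv
  using representation unfolding representation_def by blast

sublocale VV: vector_space_pair sv sv ..

sublocale VG: vector_space_pair sv sg ..

sublocale rhoL_right: Vector_Spaces.linear sv sv "rhoL y" for y
  using representation unfolding representation_def by blast

sublocale rhoR_right: Vector_Spaces.linear sv sv "rhoR y" for y
  using representation unfolding representation_def by blast

sublocale rhoL_left: Vector_Spaces.linear sg sv "\<lambda>y. rhoL y u" for u
  using representation unfolding representation_def by blast

sublocale rhoR_left: Vector_Spaces.linear sg sv "\<lambda>y. rhoR y u" for u
  using representation unfolding representation_def by blast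

lemma rhoL_bracket: "rhoL (br x y) u = rhoL x (rhoL y u) - rhoL y (rhoL x u)"
  and rhoR_bracket: "rhoR (br x y) u = rhoL x (rhoR y u) - rhoR y (rhoL x u)"
  using representation unfolding representation_def by blast+

lemmas rep_linear_simps =
  bracket_linear_simps
  rhoL_right.add rhoL_right.diff rhoL_right.scale
  rhoR_right.add rhoR_right.diff rhoR_right.scale
  rhoL_left.add rhoL_left.diff rhoL_left.scale
  rhoR_left.add rhoR_left.diff rhoR_left.scale

end

locale relative_RB_operator = leibniz_alg_rep sg br sv rhoL rhoR
  for sg :: "'k::field \<Rightarrow> 'g::ab_group_add \<Rightarrow> 'g" and br
    and sv :: "'k \<Rightarrow> 'v::ab_group_add \<Rightarrow> 'v" and rhoL rhoR +
  fixes T :: "'v \<Rightarrow> 'g"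
  assumes relative_RB: "relative_RB sg br sv rhoL rhoR T"
begin

sublocale T: Vector_Spaces.linear sv sg T
  using relative_RB unfolding relative_RB_def by blast

lemma RB_identity: "br (T u) (T v) = T (rhoL (T u) v + rhoR (T v) u)"
  using relative_RB unfolding relative_RB_def by blast

lemmas RB_linear_simps = rep_linear_simps T.add T.diff T.scale

lemma linear_dT: "Vector_Spaces.linear sv sg (dT br rhoL T x)"
proof -
  have "Vector_Spaces.linear sv sg (\<lambda>u. T (rhoL x u) - br x (T u))"
    using VG.linear_compose_sub[OF
        Vector_Spaces.linear_compose[OF rhoL_right.linear_axioms T.linear_axioms]
        Vector_Spaces.linear_compose[OF T.linear_axioms bracket_right.linear_axioms]]
    by (simp add: comp_def)
  then show ?thesis
    unfolding dT_def[abs_def] .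
qed

lemma RB_cocycle_dT: "RB_cocycle br rhoL rhoR T (dT br rhoL T x)"
  unfolding RB_cocycle_def
proof (intro allI)
  fix u v
  have "br x (T (rhoL (T u) v)) + br x (T (rhoR (T v) u))
      = br (br x (T u)) (T v) + br (T u) (br x (T v))"
    using leibniz[of x "T u" "T v"] by (simp add: RB_identity RB_linear_simps)
  then show "br (dT br rhoL T x u) (T v) + br (T u) (dT br rhoL T x v)
      = T (rhoL (dT br rhoL T x u) v + rhoR (dT br rhoL T x v) u)
        + dT br rhoL T x (rhoL (T u) v + rhoR (T v) u)"
    unfolding dT_def
    by (simp add: RB_identity RB_linear_simps rhoL_bracket rhoR_bracket algebra_simps)
qed

lemma RB_defect_linear_deformation:
  assumes "Vector_Spaces.linear sv sg P" and "RB_cocycle br rhoL rhoR T P"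
  shows "RB_defect br rhoL rhoR (\<lambda>w. T w + sg t (P w)) u v
    = sg (t * t) (RB_defect br rhoL rhoR P u v)"
proof -
  interpret P: Vector_Spaces.linear sv sg P by (fact assms(1))
  have "RB_defect br rhoL rhoR (\<lambda>w. T w + sg t (P w)) u v
      = RB_defect br rhoL rhoR T u v
        + sg t (br (P u) (T v) + br (T u) (P v)
                - T (rhoL (P u) v + rhoR (P v) u) - P (rhoL (T u) v + rhoR (T v) u))
        + sg (t * t) (RB_defect br rhoL rhoR P u v)"
    unfolding RB_defect_def by (simp add: RB_linear_simps P.add P.diff P.scale algebra_simps)
  moreover have "RB_defect br rhoL rhoR T u v = 0"
    using relative_RB unfolding relative_RB_iff_RB_defect by blast
  ultimately show ?thesis
    using assms(2) unfolding RB_cocycle_def by simp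
qed

context
  fixes x assumes Nij: "x \<in> Nij br rhoL rhoR T"
begin

lemma Nij_bracket_dT: "br x (dT br rhoL T x u) = 0"
  using Nij unfolding Nij_def dT_def by blast

lemma Nij_bracket_RB_defect_dT: "br x (RB_defect br rhoL rhoR (dT br rhoL T x) u v) = 0"
  using leibniz[of x "dT br rhoL T x u" "dT br rhoL T x v"]
  unfolding RB_defect_def by (simp add: Nij_bracket_dT bracket_right.diff)

lemma Nij_RB_hom:
  "RB_hom sg br sv rhoL rhoR (\<lambda>w. T w + sg t (dT br rhoL T x w)) T
     (\<lambda>z. z + sg t (br x z)) (\<lambda>u. u + sv t (rhoL x u))"
proof -
  have N1: "\<And>y z. br (br x y) (br x z) = 0"
    and N2: "\<And>y u. rhoL (br x y) (rhoL x u) = 0"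
    and N3: "\<And>y u. rhoR (br x y) (rhoL x u) = 0"
    using Nij unfolding Nij_def by blast+
  show ?thesis
    unfolding RB_hom_def
  proof (intro conjI allI)
    show "leibniz_hom sg br (\<lambda>z. z + sg t (br x z))"
      using N1 by (rule leibniz_hom_add_scaled_bracket)
    show "Vector_Spaces.linear sv sv (\<lambda>u. u + sv t (rhoL x u))"
      by (intro VV.linear_compose_add V.linear_ident VV.linear_compose_scale_right)
         (rule rhoL_right.linear_axioms)
    show "T (u + sv t (rhoL x u))
        = T u + sg t (dT br rhoL T x u) + sg t (br x (T u + sg t (dT br rhoL T x u)))" for u
      using Nij_bracket_dT[of u] by (simp add: dT_def RB_linear_simps algebra_simps)
    show "rhoL y u + sv t (rhoL x (rhoL y u))
        = rhoL (y + sg t (br x y)) (u + sv t (rhoL x u))" for y u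
      using N2[of y u] by (simp add: rhoL_bracket RB_linear_simps algebra_simps)
    show "rhoR y u + sv t (rhoL x (rhoR y u))
        = rhoR (y + sg t (br x y)) (u + sv t (rhoL x u))" for y u
      using N3[of y u] by (simp add: rhoR_bracket RB_linear_simps algebra_simps)
  qed
qed

end

end

theorem theorem3p8:
  fixes sg :: "'k::field \<Rightarrow> 'g::ab_group_add \<Rightarrow> 'g"
    and br :: "'g \<Rightarrow> 'g \<Rightarrow> 'g"
    and sv :: "'k \<Rightarrow> 'v::ab_group_add \<Rightarrow> 'v"
    and rhoL rhoR :: "'g \<Rightarrow> 'v \<Rightarrow> 'v"
    and T :: "'v \<Rightarrow> 'g"
    and x :: 'g
  assumes "leibniz_algebra sg br"
    and "representation sg br sv rhoL rhoR"
    and "relative_RB sg br sv rhoL rhoR T"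
    and "x \<in> Nij br rhoL rhoR T"
  shows "trivial_linear_deformation sg br sv rhoL rhoR T (dT br rhoL T x)"
proof -
  interpret relative_RB_operator sg br sv rhoL rhoR T
    using assms(1-3) by unfold_locales
  let ?P = "dT br rhoL T x"
  let ?T = "\<lambda>t w. T w + sg t (?P w)"
  have hom: "RB_hom sg br sv rhoL rhoR (?T t) T (\<lambda>z. z + sg t (br x z)) (\<lambda>u. u + sv t (rhoL x u))"
    for t using Nij_RB_hom assms(4) .
  have "RB_defect br rhoL rhoR (?T t) u v = 0" for t u v
  proof -
    have defect: "RB_defect br rhoL rhoR (?T t) u v = sg (t * t) (RB_defect br rhoL rhoR ?P u v)"
      using RB_defect_linear_deformation linear_dT RB_cocycle_dT .
    have "RB_defect br rhoL rhoR (?T t) u v + sg t (br x (RB_defect br rhoL rhoR (?T t) u v)) = 0"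
      using RB_hom_RB_defect_eq_0[OF relative_RB hom] .
    moreover have "br x (RB_defect br rhoL rhoR (?T t) u v) = 0"
      unfolding defect bracket_right.scale Nij_bracket_RB_defect_dT[OF assms(4)] by simp
    ultimately show ?thesis
      by simp
  qed
  moreover have "Vector_Spaces.linear sv sg (?T t)" for t
    by (rule VG.linear_compose_add[OF T.linear_axioms VG.linear_compose_scale_right[OF linear_dT]])
  ultimately have "relative_RB sg br sv rhoL rhoR (?T t)" for t
    unfolding relative_RB_iff_RB_defect by blast
  then show ?thesis
    unfolding trivial_linear_deformation_def generates_linear_deformation_def
    using linear_dT hom by blast
qed

end
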